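(* Let $n$ be a positive integer and let $T$ be a nonempty subset of $\mathbb{N}_0^d$. If there are points $\alpha,\beta\in E_n^\infty(T)$ such that $\beta-\alpha\in\mathbb{N}^d$ (all entries strictly positive), then $E_n^\infty(T)=E_1^\infty(T\cup\{\alpha,\beta\})=\Lambda(T)\cap\mathbb{N}_0^d$.
   Context: $\mathbb{N}=\{1,2,\dots\}$, $\mathbb{N}_0=\{0,1,2,\dots\}$. For nonempty $\Gamma\subseteq\mathbb{N}_0^d$, $\Lambda(\Gamma)$ is the coset in $\mathbb{Z}^d$ generated by $\Gamma$ (smallest coset of a subgroup of $\mathbb{Z}^d$ containing $\Gamma$); each $\lambda\in\Lambda(\Gamma)$ can be written $\lambda=\gamma+\sum_{\alpha\in\Gamma,\alpha\neq\gamma}m_{\gamma,\alpha}(\alpha-\gamma)$ with $\gamma\in\Gamma$ and integers $m_{\gamma,\alpha}$, finitely many nonzero. $d(\Gamma,\lambda)$ is the infimum over all such representations of $\max\big(\sum_{m_{\gamma,\alpha}>0}m_{\gamma,\alpha},-\sum_{m_{\gamma,\alpha}<0}m_{\gamma,\alpha}\big)$, and $E_n(\Gamma)=\{\lambda\in\Lambda(\Gamma)\cap\mathbb{N}_0^d:d(\Gamma,\lambda)\leq n\}$. Set $E_n^1(T)=E_n(T)$, $E_n^{k+1}(T)=E_n(E_n^k(T))$, and $E_n^\infty(T)=\bigcup_{k\geq1}E_n^k(T)$. *)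

theory Defs
  imports "HOL-Analysis.Analysis" "HOL-Library.Extended_Nat"
begin

text \<open>Points of Z^d are vectors int^'d (d = CARD('d) \<ge> 1 fixed).\<close>

definition nonneg_pts :: "(int^'d) set" where
  "nonneg_pts = {x. \<forall>i. x $ i \<ge> 0}"

definition pos_pts :: "(int^'d) set" where
  "pos_pts = {x. \<forall>i. x $ i > 0}"

definition is_subgroup :: "(int^'d) set \<Rightarrow> bool" where
  "is_subgroup H \<longleftrightarrow> 0 \<in> H \<and> (\<forall>x\<in>H. \<forall>y\<in>H. x + y \<in> H) \<and> (\<forall>x\<in>H. - x \<in> H)"

definition is_coset :: "(int^'d) set \<Rightarrow> bool" where
  "is_coset C \<longleftrightarrow> (\<exists>a H. is_subgroup H \<and> C = (\<lambda>h. a + h) ` H)"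

definition Lambda :: "(int^'d) set \<Rightarrow> (int^'d) set" where
  "Lambda \<Gamma> = \<Inter>{C. is_coset C \<and> \<Gamma> \<subseteq> C}"

definition is_repr :: "(int^'d) set \<Rightarrow> int^'d \<Rightarrow> int^'d \<Rightarrow> (int^'d \<Rightarrow> int) \<Rightarrow> bool" where
  "is_repr \<Gamma> l g m \<longleftrightarrow> g \<in> \<Gamma> \<and> finite {a. m a \<noteq> 0} \<and> {a. m a \<noteq> 0} \<subseteq> \<Gamma> - {g} \<and>
     l = g + (\<Sum>a\<in>{a. m a \<noteq> 0}. m a *s (a - g))"

definition repr_cost :: "(int^'d \<Rightarrow> int) \<Rightarrow> nat" where
  "repr_cost m = nat (max (\<Sum>a\<in>{a. m a > 0}. m a) (- (\<Sum>a\<in>{a. m a < 0}. m a)))"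

definition dist_G :: "(int^'d) set \<Rightarrow> int^'d \<Rightarrow> enat" where
  "dist_G \<Gamma> l = (INF p\<in>{(g, m). is_repr \<Gamma> l g m}. enat (repr_cost (snd p)))"

definition E :: "nat \<Rightarrow> (int^'d) set \<Rightarrow> (int^'d) set" where
  "E n \<Gamma> = {l \<in> Lambda \<Gamma> \<inter> nonneg_pts. dist_G \<Gamma> l \<le> enat n}"

definition E_inf :: "nat \<Rightarrow> (int^'d) set \<Rightarrow> (int^'d) set" where
  "E_inf n T = (\<Union>k\<in>{1..}. (E n ^^ k) T)"

end

theory Submission imports Defs begin

(* Put v = \<beta> - \<alpha>, a vector with positive entries. A set S in the orthant that contains
   \<alpha>, \<beta> and is closed under x + y - z (whenever the result is nonnegative) is stable under
   adding v, and under subtracting v as long as the point stays nonnegative. A difference a - b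
   of points of S can be added to any point of S once that point has been shifted by a multiple
   of v dominating b. Hence \<alpha> + w + k v \<in> S for every w in the group spanned by differences
   of S and k large, and subtracting v again gives \<Lambda>(S) \<inter> N_0^d = S.
   E_1^\<infinity>(T \<union> {\<alpha>, \<beta>}) is such a set, and it is squeezed between \<Lambda>(T) \<inter> N_0^d and
   E_n^\<infinity>(T) \<subseteq> \<Lambda>(T) because \<alpha> and \<beta> already lie in a finite iterate E_n^K(T). *)

lemma dist_G_le_repr_cost: "is_repr G l g m \<Longrightarrow> dist_G G l \<le> enat (repr_cost m)"
  unfolding dist_G_def by (rule INF_lower2[of "(g, m)"]) auto

lemma subset_Lambda: "X \<subseteq> Lambda X"
  unfolding Lambda_def by blast

lemma Lambda_least: "X \<subseteq> Lambda Y \<Longrightarrow> Lambda X \<subseteq> Lambda Y"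
  unfolding Lambda_def by blast

lemma Lambda_mono: "X \<subseteq> Y \<Longrightarrow> Lambda X \<subseteq> Lambda Y"
  using Lambda_least subset_Lambda by blast

lemma coset_affine_closed:
  assumes "is_coset C" "x \<in> C" "y \<in> C" "z \<in> C"
  shows "x + y - z \<in> C"
proof -
  obtain a H where H: "is_subgroup H" "C = (\<lambda>h. a + h) ` H"
    using assms(1) unfolding is_coset_def by blast
  obtain hx hy hz where h: "hx \<in> H" "hy \<in> H" "hz \<in> H" "x = a + hx" "y = a + hy" "z = a + hz"
    using assms(2-4) H(2) by blast
  have "hx + hy + - hz \<in> H"
    using H(1) h(1-3) unfolding is_subgroup_def by blast
  moreover have "x + y - z = a + (hx + hy + - hz)"
    using h(4-6) by (simp add: algebra_simps)
  ultimately show ?thesis using H(2) by blast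
qed

lemma Lambda_affine_closed:
  "x \<in> Lambda G \<Longrightarrow> y \<in> Lambda G \<Longrightarrow> z \<in> Lambda G \<Longrightarrow> x + y - z \<in> Lambda G"
  unfolding Lambda_def using coset_affine_closed by blast

inductive_set diff_span :: "(int^'d) set \<Rightarrow> (int^'d) set" for G where
  zero: "0 \<in> diff_span G"
| add_diff: "w \<in> diff_span G \<Longrightarrow> a \<in> G \<Longrightarrow> b \<in> G \<Longrightarrow> w + (a - b) \<in> diff_span G"

lemma diff_span_add: "w \<in> diff_span G \<Longrightarrow> v \<in> diff_span G \<Longrightarrow> v + w \<in> diff_span G"
proof (induction w rule: diff_span.induct)
  case (add_diff w a b)
  then have "v + w + (a - b) \<in> diff_span G" by (intro diff_span.add_diff)
  then show ?case by (simp add: add.assoc)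
qed simp

lemma diff_span_uminus: "w \<in> diff_span G \<Longrightarrow> - w \<in> diff_span G"
proof (induction w rule: diff_span.induct)
  case (add_diff w a b)
  then have "- w + (b - a) \<in> diff_span G" by (intro diff_span.add_diff)
  then show ?case by (simp add: algebra_simps)
qed (simp add: diff_span.zero)

lemma Lambda_subset_diff_span:
  assumes "g \<in> G"
  shows "Lambda G \<subseteq> (\<lambda>h. g + h) ` diff_span G"
proof -
  have "is_subgroup (diff_span G)"
    unfolding is_subgroup_def using diff_span.zero diff_span_add diff_span_uminus by blast
  then have coset: "is_coset ((\<lambda>h. g + h) ` diff_span G)"
    unfolding is_coset_def by blast
  have "G \<subseteq> (\<lambda>h. g + h) ` diff_span G"
  proof
    fix a assume "a \<in> G"
    then have "0 + (a - g) \<in> diff_span G" using assms by (intro diff_span.intros)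
    then show "a \<in> (\<lambda>h. g + h) ` diff_span G" by (intro image_eqI[of _ _ "a - g"]) auto
  qed
  with coset show ?thesis unfolding Lambda_def by blast
qed

lemma nonneg_pts_add: "x \<in> nonneg_pts \<Longrightarrow> y \<in> nonneg_pts \<Longrightarrow> x + y \<in> nonneg_pts"
  unfolding nonneg_pts_def by simp

lemma nonneg_pts_smult: "x \<in> nonneg_pts \<Longrightarrow> of_nat k *s x \<in> nonneg_pts"
  unfolding nonneg_pts_def by simp

lemma pos_pts_subset_nonneg_pts: "pos_pts \<subseteq> nonneg_pts"
  unfolding pos_pts_def nonneg_pts_def by (auto simp: less_imp_le)

lemma pos_pts_dominates:
  fixes b v :: "int^'d"
  assumes "v \<in> pos_pts"
  obtains k :: nat where "of_nat k *s v - b \<in> nonneg_pts"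
proof
  let ?k = "nat (\<Sum>j\<in>UNIV. \<bar>b $ j\<bar>)"
  have "b $ i \<le> of_nat ?k * v $ i" for i
  proof -
    have "b $ i \<le> (\<Sum>j\<in>UNIV. \<bar>b $ j\<bar>)"
      using member_le_sum[of i UNIV "\<lambda>j. \<bar>b $ j\<bar>"] by auto
    also have "\<dots> = of_nat ?k * 1"
      by (simp add: sum_nonneg)
    also have "\<dots> \<le> of_nat ?k * v $ i"
      using assms unfolding pos_pts_def by (intro mult_left_mono) (auto simp: int_one_le_iff_zero_less)
    finally show ?thesis .
  qed
  then show "of_nat ?k *s v - b \<in> nonneg_pts"
    unfolding nonneg_pts_def by simp
qed

locale orthant_closed =
  fixes S :: "(int^'d) set" and \<alpha> \<beta> :: "int^'d"
  assumes nonneg: "S \<subseteq> nonneg_pts"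
    and affine_closed: "\<And>x y z. x \<in> S \<Longrightarrow> y \<in> S \<Longrightarrow> z \<in> S \<Longrightarrow>
      x + y - z \<in> nonneg_pts \<Longrightarrow> x + y - z \<in> S"
    and alpha_mem: "\<alpha> \<in> S" and beta_mem: "\<beta> \<in> S"
    and diff_pos: "\<beta> - \<alpha> \<in> pos_pts"
begin

lemma diff_nonneg: "\<beta> - \<alpha> \<in> nonneg_pts"
  using diff_pos pos_pts_subset_nonneg_pts by blast

lemma add_multiple_mem:
  assumes "x \<in> S"
  shows "x + of_nat k *s (\<beta> - \<alpha>) \<in> S"
proof (induction k)
  case (Suc k)
  let ?y = "x + of_nat k *s (\<beta> - \<alpha>)"
  have "?y + \<beta> - \<alpha> = ?y + (\<beta> - \<alpha>)"
    by (simp add: algebra_simps)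
  then have "?y + \<beta> - \<alpha> \<in> nonneg_pts"
    using Suc nonneg diff_nonneg nonneg_pts_add by (metis subsetD)
  then have "?y + \<beta> - \<alpha> \<in> S"
    using affine_closed[OF Suc beta_mem alpha_mem] by blast
  moreover have "?y + \<beta> - \<alpha> = x + of_nat (Suc k) *s (\<beta> - \<alpha>)"
    by (simp add: vec_eq_iff algebra_simps)
  ultimately show ?case by metis
qed (use assms in simp)

lemma mem_if_add_multiple_mem:
  assumes "l \<in> nonneg_pts" and "l + of_nat k *s (\<beta> - \<alpha>) \<in> S"
  shows "l \<in> S"
  using assms(2)
proof (induction k)
  case (Suc k)
  let ?y = "l + of_nat k *s (\<beta> - \<alpha>)"
  have eq: "l + of_nat (Suc k) *s (\<beta> - \<alpha>) + \<alpha> - \<beta> = ?y"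
    by (simp add: vec_eq_iff algebra_simps)
  have "?y \<in> nonneg_pts"
    using assms(1) diff_nonneg nonneg_pts_add nonneg_pts_smult by blast
  then have "?y \<in> S"
    using affine_closed[OF Suc.prems alpha_mem beta_mem] unfolding eq by blast
  then show ?case by (rule Suc.IH)
qed simp

lemma diff_span_shift_mem:
  assumes "w \<in> diff_span S" and "x \<in> S"
  shows "\<exists>k. x + w + of_nat k *s (\<beta> - \<alpha>) \<in> S"
  using assms
proof (induction w arbitrary: x rule: diff_span.induct)
  case zero
  show ?case using zero.prems by (intro exI[of _ 0]) simp
next
  case (add_diff w a b)
  obtain k1 where y: "x + w + of_nat k1 *s (\<beta> - \<alpha>) \<in> S" (is "?y \<in> S")
    using add_diff.IH add_diff.prems by blast
  obtain k2 :: nat where dom: "of_nat k2 *s (\<beta> - \<alpha>) - b \<in> nonneg_pts"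
    using pos_pts_dominates[OF diff_pos] by blast
  let ?z = "?y + of_nat k2 *s (\<beta> - \<alpha>)"
  have z: "?z \<in> S" using add_multiple_mem[OF y] .
  have "?z + a - b = ?y + a + (of_nat k2 *s (\<beta> - \<alpha>) - b)"
    by (simp add: algebra_simps)
  then have "?z + a - b \<in> nonneg_pts"
    using y add_diff.hyps(2) nonneg dom nonneg_pts_add by (metis subsetD)
  then have "?z + a - b \<in> S"
    using affine_closed[OF z add_diff.hyps(2,3)] by blast
  moreover have "?z + a - b = x + (w + (a - b)) + of_nat (k1 + k2) *s (\<beta> - \<alpha>)"
    by (simp add: vec_eq_iff algebra_simps)
  ultimately show ?case by metis
qed

theorem Lambda_inter_nonneg_subset: "Lambda S \<inter> nonneg_pts \<subseteq> S"
proof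
  fix l assume l: "l \<in> Lambda S \<inter> nonneg_pts"
  then obtain w where w: "w \<in> diff_span S" "l = \<alpha> + w"
    using Lambda_subset_diff_span[OF alpha_mem] by blast
  then obtain k where "l + of_nat k *s (\<beta> - \<alpha>) \<in> S"
    using diff_span_shift_mem[OF w(1) alpha_mem] by blast
  then show "l \<in> S" using mem_if_add_multiple_mem l by blast
qed

end

lemma E_subset: "E n G \<subseteq> Lambda G \<inter> nonneg_pts"
  unfolding E_def by blast

lemma subset_E:
  assumes "G \<subseteq> nonneg_pts"
  shows "G \<subseteq> E n G"
proof
  fix g assume g: "g \<in> G"
  then have "is_repr G g g (\<lambda>_. 0)" unfolding is_repr_def by simp
  then have "dist_G G g \<le> enat 0"
    using dist_G_le_repr_cost by (fastforce simp: repr_cost_def)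
  then show "g \<in> E n G"
    unfolding E_def using g assms subset_Lambda[of G] by (auto simp: zero_enat_def[symmetric])
qed

lemma E_mono:
  assumes "n \<le> n'" "X \<subseteq> Y"
  shows "E n X \<subseteq> E n' Y"
proof
  fix l assume l: "l \<in> E n X"
  have reprs: "{(g, m). is_repr X l g m} \<subseteq> {(g, m). is_repr Y l g m}"
    using assms(2) by (auto simp: is_repr_def)
  have "dist_G Y l \<le> dist_G X l"
    unfolding dist_G_def by (rule INF_superset_mono[OF reprs]) simp
  also have "\<dots> \<le> enat n" using l unfolding E_def by auto
  also have "\<dots> \<le> enat n'" using assms(1) by simp
  finally show "l \<in> E n' Y" using l Lambda_mono[OF assms(2)] unfolding E_def by auto
qed

lemma dist_G_affine_combination_le_1:
  assumes "x \<in> G" "y \<in> G" "z \<in> G" "z \<noteq> x" "z \<noteq> y"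
  shows "dist_G G (x + y - z) \<le> 1"
proof (cases "x = y")
  case True
  define m where "m = (\<lambda>a. if a = z then - 1 else (0::int))"
  have supp: "{a. m a \<noteq> 0} = {z}" "{a. m a > 0} = {}" "{a. m a < 0} = {z}"
    unfolding m_def by auto
  have "is_repr G (x + y - z) x m"
    unfolding is_repr_def supp using assms True by (auto simp: m_def) (simp add: vec_eq_iff)
  moreover have "repr_cost m = 1"
    unfolding repr_cost_def supp by (simp add: m_def)
  ultimately show ?thesis using dist_G_le_repr_cost by (metis one_enat_def)
next
  case False
  define m where "m = (\<lambda>a. if a = x then 1 else if a = z then - 1 else (0::int))"
  have supp: "{a. m a \<noteq> 0} = {x, z}" "{a. m a > 0} = {x}" "{a. m a < 0} = {z}"
    unfolding m_def using assms(4) by auto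
  have "is_repr G (x + y - z) y m"
    unfolding is_repr_def supp using assms False by (auto simp: m_def) (simp add: vec_eq_iff)
  moreover have "repr_cost m = 1"
    unfolding repr_cost_def supp using assms(4) by (simp add: m_def)
  ultimately show ?thesis using dist_G_le_repr_cost by (metis one_enat_def)
qed

lemma E_affine_closed:
  assumes "1 \<le> n" "G \<subseteq> nonneg_pts" "x \<in> G" "y \<in> G" "z \<in> G" "x + y - z \<in> nonneg_pts"
  shows "x + y - z \<in> E n G"
proof (cases "z = x \<or> z = y")
  case True
  then have "x + y - z \<in> G" using assms(3,4) by (metis add_diff_cancel add_diff_cancel_left')
  then show ?thesis using subset_E[OF assms(2)] by blast
next
  case False
  then have "dist_G G (x + y - z) \<le> enat n"
    using dist_G_affine_combination_le_1[OF assms(3-5)] assms(1)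
    by (metis enat_ord_simps(1) one_enat_def order_trans)
  moreover have "x + y - z \<in> Lambda G"
    using assms(3-5) subset_Lambda[of G] Lambda_affine_closed by blast
  ultimately show ?thesis unfolding E_def using assms(6) by simp
qed

lemma funpow_E_nonneg: "T \<subseteq> nonneg_pts \<Longrightarrow> (E n ^^ k) T \<subseteq> nonneg_pts"
proof (cases k)
  case (Suc j)
  then show ?thesis using E_subset[of n "(E n ^^ j) T"] by auto
qed simp

lemma funpow_E_subset_Lambda: "(E n ^^ k) T \<subseteq> Lambda T"
proof (induction k)
  case (Suc k)
  have "E n ((E n ^^ k) T) \<subseteq> Lambda ((E n ^^ k) T)" using E_subset by blast
  also have "\<dots> \<subseteq> Lambda T" using Lambda_least[OF Suc.IH] .
  finally show ?case by simp
qed (simp add: subset_Lambda)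

lemma funpow_E_increasing:
  assumes "T \<subseteq> nonneg_pts" "k \<le> k'"
  shows "(E n ^^ k) T \<subseteq> (E n ^^ k') T"
  using assms(2)
proof (induction k' rule: dec_induct)
  case (step j)
  have "(E n ^^ j) T \<subseteq> E n ((E n ^^ j) T)"
    by (rule subset_E[OF funpow_E_nonneg[OF assms(1)]])
  then show ?case using step by simp
qed simp

lemma funpow_E_mono:
  assumes "n \<le> n'" "X \<subseteq> Y"
  shows "(E n ^^ k) X \<subseteq> (E n' ^^ k) Y"
proof (induction k)
  case (Suc k)
  then show ?case using E_mono[OF assms(1) Suc.IH] by simp
qed (simp add: assms(2))

lemma mem_E_inf_iff:
  assumes "T \<subseteq> nonneg_pts"
  shows "x \<in> E_inf n T \<longleftrightarrow> (\<exists>k. x \<in> (E n ^^ k) T)"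
proof
  assume "\<exists>k. x \<in> (E n ^^ k) T"
  then obtain k where "x \<in> (E n ^^ k) T" by blast
  then have "x \<in> (E n ^^ Suc k) T" using funpow_E_increasing[OF assms, of k "Suc k"] by auto
  then show "x \<in> E_inf n T" unfolding E_inf_def by (intro UN_I[of "Suc k"]) auto
qed (auto simp: E_inf_def)

lemma subset_E_inf: "T \<subseteq> nonneg_pts \<Longrightarrow> T \<subseteq> E_inf n T"
  using mem_E_inf_iff[of T _ n] by (metis funpow_0 subsetI)

lemma E_inf_subset: "E_inf n T \<subseteq> Lambda T \<inter> nonneg_pts"
proof
  fix x assume "x \<in> E_inf n T"
  then obtain k where "k \<ge> 1" "x \<in> (E n ^^ k) T"
    unfolding E_inf_def by auto
  then obtain j where "x \<in> E n ((E n ^^ j) T)"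
    by (cases k) auto
  then show "x \<in> Lambda T \<inter> nonneg_pts"
    using E_subset Lambda_least[OF funpow_E_subset_Lambda] by blast
qed

lemma finite_subset_E_inf_level:
  assumes "T \<subseteq> nonneg_pts" "finite F" "F \<subseteq> E_inf n T"
  obtains K where "F \<subseteq> (E n ^^ K) T"
  using assms(2,3)
proof (induction F arbitrary: thesis rule: finite_induct)
  case empty
  then show ?case by blast
next
  case (insert x F)
  obtain K where K: "F \<subseteq> (E n ^^ K) T" using insert by blast
  obtain k where k: "x \<in> (E n ^^ k) T" using insert.prems(2) mem_E_inf_iff[OF assms(1)] by blast
  have "(E n ^^ k) T \<subseteq> (E n ^^ max k K) T" "(E n ^^ K) T \<subseteq> (E n ^^ max k K) T"
    by (simp_all add: funpow_E_increasing[OF assms(1)])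
  then have "insert x F \<subseteq> (E n ^^ max k K) T"
    using K k by blast
  then show ?case by (rule insert.prems(1))
qed

lemma E_inf_affine_closed:
  assumes "1 \<le> n" "T \<subseteq> nonneg_pts" "x \<in> E_inf n T" "y \<in> E_inf n T" "z \<in> E_inf n T"
    and "x + y - z \<in> nonneg_pts"
  shows "x + y - z \<in> E_inf n T"
proof -
  obtain K where "{x, y, z} \<subseteq> (E n ^^ K) T"
    using finite_subset_E_inf_level[OF assms(2), of "{x, y, z}" n] assms(3-5) by auto
  then have "x + y - z \<in> E n ((E n ^^ K) T)"
    using E_affine_closed[OF assms(1) funpow_E_nonneg[OF assms(2)]] assms(6) by auto
  then show ?thesis using mem_E_inf_iff[OF assms(2)] by (metis funpow.simps(2) o_apply)
qed

lemma E_inf_subset_E_inf: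
  assumes "m \<le> n" "G \<subseteq> (E n ^^ K) T"
  shows "E_inf m G \<subseteq> E_inf n T"
proof
  fix x assume "x \<in> E_inf m G"
  then obtain j where j: "j \<ge> 1" "x \<in> (E m ^^ j) G" unfolding E_inf_def by auto
  have "(E m ^^ j) G \<subseteq> (E n ^^ (j + K)) T"
    using funpow_E_mono[OF assms] by (simp add: funpow_add)
  then show "x \<in> E_inf n T" unfolding E_inf_def using j by (intro UN_I[of "j + K"]) auto
qed

theorem lemma3p3:
  fixes n :: nat and T :: "(int^'d) set" and \<alpha> \<beta> :: "int^'d"
  assumes "n \<ge> 1"
    and "T \<noteq> {}" and "T \<subseteq> nonneg_pts"
    and "\<alpha> \<in> E_inf n T" and "\<beta> \<in> E_inf n T"
    and "\<beta> - \<alpha> \<in> pos_pts"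
  shows "E_inf n T = E_inf 1 (T \<union> {\<alpha>, \<beta>}) \<and> E_inf 1 (T \<union> {\<alpha>, \<beta>}) = Lambda T \<inter> nonneg_pts"
proof -
  define G where "G = T \<union> {\<alpha>, \<beta>}"
  have G_Lambda: "G \<subseteq> Lambda T" and G_nonneg: "G \<subseteq> nonneg_pts"
    using E_inf_subset[of n T] subset_Lambda[of T] assms(3-5) unfolding G_def by auto
  obtain K where "{\<alpha>, \<beta>} \<subseteq> (E n ^^ K) T"
    using finite_subset_E_inf_level[OF assms(3), of "{\<alpha>, \<beta>}"] assms(4,5) by auto
  then have "G \<subseteq> (E n ^^ K) T"
    using funpow_E_increasing[OF assms(3), of 0 K n] unfolding G_def by auto
  then have E1_subset_En: "E_inf 1 G \<subseteq> E_inf n T"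
    using E_inf_subset_E_inf assms(1) by blast
  interpret orthant_closed "E_inf 1 G" \<alpha> \<beta>
    using E_inf_subset[of 1 G] E_inf_affine_closed[OF order_refl G_nonneg] subset_E_inf[OF G_nonneg]
      assms(6) unfolding G_def by unfold_locales auto
  have "Lambda T \<inter> nonneg_pts \<subseteq> E_inf 1 G"
    using Lambda_mono[OF subset_E_inf[OF G_nonneg, of 1]] Lambda_mono[of T G]
      Lambda_inter_nonneg_subset unfolding G_def by blast
  moreover have "E_inf 1 G \<subseteq> Lambda T \<inter> nonneg_pts"
    using E_inf_subset[of 1 G] Lambda_least[OF G_Lambda] by blast
  ultimately show ?thesis using E_inf_subset[of n T] E1_subset_En unfolding G_def by blast
qed

end
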